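(* Let $\Sigma$ be an $n\times n$ Hermitian positive semidefinite matrix which is irreducible. If the argument of each non-zero off-diagonal entry of $-\Sigma$ lies in $\left(-\frac{\pi}{2^n},\frac{\pi}{2^n}\right)$, then ${\operatorname{mr}}(\Sigma)=n-1$, where \[{\operatorname{mr}}(\Sigma)=\min\{\operatorname{rank}(\hat\Sigma)\mid \Sigma=\tilde\Sigma+\hat\Sigma,\ \hat\Sigma\text{ Hermitian positive semidefinite},\ \tilde\Sigma\text{ diagonal}\}.\]
   Context: A square matrix is irreducible if it cannot be brought into block-diagonal form (with at least two diagonal blocks) by a simultaneous permutation of its rows and columns. In the definition of ${\operatorname{mr}}$ the diagonal matrix $\tilde\Sigma$ (necessarily real, since $\Sigma-\hat\Sigma$ is Hermitian) is not required to be positive semidefinite. *)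

theory Defs
  imports "HOL-Analysis.Complex_Transcendental" "Jordan_Normal_Form.DL_Rank"
begin

definition hermitian_mat :: "nat \<Rightarrow> complex mat \<Rightarrow> bool" where
  "hermitian_mat n A \<longleftrightarrow> A \<in> carrier_mat n n \<and>
     (\<forall>i<n. \<forall>j<n. A $$ (i, j) = cnj (A $$ (j, i)))"

definition psd_mat :: "nat \<Rightarrow> complex mat \<Rightarrow> bool" where
  "psd_mat n A \<longleftrightarrow> hermitian_mat n A \<and>
     (\<forall>x :: nat \<Rightarrow> complex.
        (\<Sum>i<n. \<Sum>j<n. cnj (x i) * A $$ (i, j) * x j) \<in> \<real> \<and>
        Re (\<Sum>i<n. \<Sum>j<n. cnj (x i) * A $$ (i, j) * x j) \<ge> 0)"

(* Reducible: some simultaneous permutation of rows and columns brings A into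
   block-diagonal form with at least two diagonal blocks (the first block of
   size k, 0 < k < n, the remaining blocks lumped together). *)
definition reducible_mat :: "nat \<Rightarrow> complex mat \<Rightarrow> bool" where
  "reducible_mat n A \<longleftrightarrow> (\<exists>p k. p permutes {..<n} \<and> 0 < k \<and> k < n \<and>
      (\<forall>i<n. \<forall>j<n. (i < k \<and> k \<le> j \<or> j < k \<and> k \<le> i) \<longrightarrow> A $$ (p i, p j) = 0))"

definition irreducible_mat :: "nat \<Rightarrow> complex mat \<Rightarrow> bool" where
  "irreducible_mat n A \<longleftrightarrow> A \<in> carrier_mat n n \<and> \<not> reducible_mat n A"

definition mr :: "nat \<Rightarrow> complex mat \<Rightarrow> nat" where
  "mr n S = Min {vec_space.rank n Sh | Sh. Sh \<in> carrier_mat n n \<and> psd_mat n Sh \<and>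
                                        diagonal_mat (S - Sh)}"

end

theory Submission
  imports Defs "Jordan_Normal_Form.DL_Rank_Submatrix"
begin

(* Every feasible Sigma-hat agrees with Sigma off the diagonal, so it is irreducible and the
   off-diagonal entries of -Sigma-hat lie in the open sector of half-angle pi/2^n. Taking the Schur
   complement at a vertex (whose pivot is positive by irreducibility) keeps the matrix positive
   semidefinite and irreducible and at most doubles the angle, which stays below pi/2, so no
   cancellation can occur. By induction, a kernel vector of Sigma-hat vanishing at one coordinate
   vanishes everywhere; hence the leading (n-1)x(n-1) block of Sigma-hat is nonsingular and its rank
   is at least n-1. Conversely, the same fact for Sigma shows that a vector w annihilated by all rows
   of Sigma but the last has w_n <> 0; subtracting the real number (Sigma w)_n / w_n from the last
   diagonal entry gives a feasible singular Sigma-hat. *)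

section \<open>Sectors of the complex plane\<close>

definition in_sector :: "real \<Rightarrow> complex \<Rightarrow> bool" where
  "in_sector \<phi> z \<longleftrightarrow> z \<noteq> 0 \<and> - \<phi> < Arg z \<and> Arg z < \<phi>"

text \<open>For half-angles up to \<open>\<pi>/2\<close> the open sector is the intersection of two open half-planes,
  which makes it closed under addition.\<close>

lemma in_sector_iff_half_planes:
  assumes p0: "0 < \<phi>" and p2: "\<phi> \<le> pi / 2"
  shows "in_sector \<phi> z \<longleftrightarrow> Im z * cos \<phi> < Re z * sin \<phi> \<and> - (Re z * sin \<phi>) < Im z * cos \<phi>"
proof (cases "z = 0")
  case True
  then show ?thesis by (simp add: in_sector_def)
next
  case False
  define a where "a = Arg z"
  have n: "cmod z > 0" using False by simp
  have e1: "Im z * cos \<phi> - Re z * sin \<phi> = cmod z * sin (a - \<phi>)"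
    using False by (simp add: a_def cos_Arg sin_Arg sin_diff algebra_simps)
  have e2: "Im z * cos \<phi> + Re z * sin \<phi> = cmod z * sin (a + \<phi>)"
    using False by (simp add: a_def cos_Arg sin_Arg sin_add algebra_simps)
  have ab: "- pi < a" "a \<le> pi" using mpi_less_Arg Arg_le_pi a_def by auto
  have "-\<phi> < a \<and> a < \<phi> \<longleftrightarrow> sin (a - \<phi>) < 0 \<and> 0 < sin (a + \<phi>)"
  proof
    assume h: "-\<phi> < a \<and> a < \<phi>"
    have "0 < sin (-(a - \<phi>))" by (rule sin_gt_zero) (use h p2 in auto)
    moreover have "0 < sin (a + \<phi>)" by (rule sin_gt_zero) (use h p2 in auto)
    ultimately show "sin (a - \<phi>) < 0 \<and> 0 < sin (a + \<phi>)" using sin_minus[of "a - \<phi>"] by linarith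
  next
    assume s: "sin (a - \<phi>) < 0 \<and> 0 < sin (a + \<phi>)"
    have "a < \<phi>"
    proof (rule ccontr)
      assume "\<not> a < \<phi>"
      then have "0 \<le> sin (a - \<phi>)" by (intro sin_ge_zero) (use ab p0 in auto)
      then show False using s by simp
    qed
    moreover have "-\<phi> < a"
    proof (rule ccontr)
      assume "\<not> -\<phi> < a"
      then have "0 \<le> sin (-(a + \<phi>))" by (intro sin_ge_zero) (use ab p0 in auto)
      then show False using s sin_minus[of "a + \<phi>"] by linarith
    qed
    ultimately show "-\<phi> < a \<and> a < \<phi>" by simp
  qed
  moreover have "Im z * cos \<phi> < Re z * sin \<phi> \<longleftrightarrow> cmod z * sin (a - \<phi>) < 0"
    unfolding e1[symmetric] by simp
  moreover have "- (Re z * sin \<phi>) < Im z * cos \<phi> \<longleftrightarrow> 0 < cmod z * sin (a + \<phi>)"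
    unfolding e2[symmetric] by linarith
  ultimately show ?thesis using False n by (auto simp: in_sector_def a_def mult_less_0_iff zero_less_mult_iff)
qed

lemma in_sector_add:
  assumes "0 < \<phi>" "\<phi> \<le> pi / 2" "in_sector \<phi> a" "in_sector \<phi> b"
  shows "in_sector \<phi> (a + b)"
  using assms in_sector_iff_half_planes[OF assms(1,2)] by (simp add: distrib_right)

lemma in_sector_mono: "in_sector \<phi> a \<Longrightarrow> \<phi> \<le> \<psi> \<Longrightarrow> in_sector \<psi> a"
  by (auto simp: in_sector_def)

lemma in_sector_divide_of_real: "in_sector \<phi> a \<Longrightarrow> 0 < r \<Longrightarrow> in_sector \<phi> (a / of_real r)"
  by (auto simp: in_sector_def)

lemma in_sector_mult:
  assumes "in_sector \<phi> a" "in_sector \<psi> b" "\<phi> + \<psi> \<le> pi"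
  shows "in_sector (\<phi> + \<psi>) (a * b)"
proof -
  have a0: "a \<noteq> 0" and b0: "b \<noteq> 0" using assms by (auto simp: in_sector_def)
  have "a * b = of_real (cmod a * cmod b) * exp (\<i> * of_real (Arg a + Arg b))"
    using Arg_eq[OF a0] Arg_eq[OF b0] by (simp add: algebra_simps exp_add)
  then have "Arg (a * b) = Arg a + Arg b"
    by (intro Arg_unique[of "cmod a * cmod b"]) (use assms a0 b0 in \<open>auto simp: in_sector_def\<close>)
  then show ?thesis using assms a0 b0 by (auto simp: in_sector_def)
qed

definition qform :: "'a set \<Rightarrow> ('a \<Rightarrow> 'a \<Rightarrow> complex) \<Rightarrow> ('a \<Rightarrow> complex) \<Rightarrow> complex" where
  "qform V H x = (\<Sum>i\<in>V. \<Sum>j\<in>V. cnj (x i) * H i j * x j)"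

definition hermitian_on :: "'a set \<Rightarrow> ('a \<Rightarrow> 'a \<Rightarrow> complex) \<Rightarrow> bool" where
  "hermitian_on V H \<longleftrightarrow> (\<forall>i\<in>V. \<forall>j\<in>V. H i j = cnj (H j i))"

definition psd_on :: "'a set \<Rightarrow> ('a \<Rightarrow> 'a \<Rightarrow> complex) \<Rightarrow> bool" where
  "psd_on V H \<longleftrightarrow> hermitian_on V H \<and> (\<forall>x. 0 \<le> Re (qform V H x))"

definition in_kernel :: "'a set \<Rightarrow> ('a \<Rightarrow> 'a \<Rightarrow> complex) \<Rightarrow> ('a \<Rightarrow> complex) \<Rightarrow> bool" where
  "in_kernel V H z \<longleftrightarrow> (\<forall>i\<in>V. (\<Sum>j\<in>V. H i j * z j) = 0)"

lemma hermitian_onD: "hermitian_on V H \<Longrightarrow> i \<in> V \<Longrightarrow> j \<in> V \<Longrightarrow> cnj (H i j) = H j i"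
  unfolding hermitian_on_def by (metis complex_cnj_cnj)

lemma psd_on_hermitian: "psd_on V H \<Longrightarrow> hermitian_on V H"
  unfolding psd_on_def by blast

lemma psd_on_qform_nonneg: "psd_on V H \<Longrightarrow> 0 \<le> Re (qform V H x)"
  unfolding psd_on_def by blast

lemma qform_real:
  assumes "hermitian_on V H"
  shows "qform V H x \<in> \<real>"
proof -
  have "cnj (qform V H x) = (\<Sum>i\<in>V. \<Sum>j\<in>V. cnj (x j) * H j i * x i)"
    unfolding qform_def cnj_sum
    by (intro sum.cong refl) (simp add: hermitian_onD[OF assms] mult.commute mult.left_commute)
  also have "\<dots> = qform V H x"
    unfolding qform_def by (rule sum.swap)
  finally show ?thesis by (simp add: Reals_cnj_iff)
qed

lemma qform_add_indicator:
  assumes "finite V" "i \<in> V"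
  shows "qform V H (\<lambda>j. x j + (if j = i then t else 0)) =
    qform V H x + cnj t * (\<Sum>j\<in>V. H i j * x j) + (\<Sum>j\<in>V. cnj (x j) * H j i) * t + cnj t * H i i * t"
proof -
  have e: "\<And>a b. cnj (x a + (if a = i then t else 0)) * H a b * (x b + (if b = i then t else 0))
     = cnj (x a) * H a b * x b + (if b = i then cnj (x a) * H a b * t else 0)
       + (if a = i then cnj t * H a b * x b else 0) + (if a = i then (if b = i then cnj t * H i i * t else 0) else 0)"
    by (simp add: algebra_simps)
  have const_if: "\<And>S P f. (\<Sum>b\<in>S. if P then f b else 0) = (if P then sum f S else 0)"
    by simp
  show ?thesis
    unfolding qform_def e sum.distrib
    using assms by (simp add: sum.delta const_if mult.assoc sum_distrib_left sum_distrib_right cong: if_cong)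
qed

lemma qform_insert:
  assumes "finite W" "v \<notin> W"
  shows "qform (insert v W) H (x(v := t)) =
    qform W H x + cnj t * (\<Sum>j\<in>W. H v j * x j) + (\<Sum>i\<in>W. cnj (x i) * H i v) * t + cnj t * H v v * t"
proof -
  have "j \<noteq> v" if "j \<in> W" for j
    using assms that by auto
  then show ?thesis
    using assms unfolding qform_def
    by (simp add: sum.distrib sum_distrib_left sum_distrib_right algebra_simps cong: sum.cong)
qed

lemma psd_on_diag:
  assumes "finite V" "psd_on V H" "i \<in> V"
  shows "H i i = of_real (Re (H i i))" "0 \<le> Re (H i i)"
proof -
  show "H i i = of_real (Re (H i i))"
    using hermitian_onD[OF psd_on_hermitian[OF assms(2)] assms(3,3)] by (simp add: complex_eq_iff)
  have "qform V H (\<lambda>j. 0 + (if j = i then 1 else 0)) = H i i"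
    using qform_add_indicator[OF assms(1,3), of H "\<lambda>_. 0" 1] by (simp add: qform_def)
  then show "0 \<le> Re (H i i)"
    using psd_on_qform_nonneg[OF assms(2)] by metis
qed

text \<open>Perturbing a null vector \<open>x\<close> by \<open>-s (Hx)\<^sub>i\<close> in coordinate \<open>i\<close> changes the form by
  \<open>(s\<^sup>2 H\<^sub>i\<^sub>i - 2s) |(Hx)\<^sub>i|\<^sup>2\<close>, which is negative for small \<open>s > 0\<close> unless \<open>(Hx)\<^sub>i = 0\<close>.\<close>

lemma psd_on_in_kernel_if_qform_zero:
  assumes fin: "finite V" and psd: "psd_on V H" and q: "qform V H x = 0"
  shows "in_kernel V H x"
  unfolding in_kernel_def
proof
  fix i assume i: "i \<in> V"
  define w where "w = (\<Sum>j\<in>V. H i j * x j)"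
  define c where "c = Re (H i i)"
  define s where "s = 1 / (c + 1)"
  have c: "H i i = of_real c" "0 \<le> c"
    using psd_on_diag[OF fin psd i] by (simp_all add: c_def)
  have "0 < s" "s * c < 1"
    using c(2) by (simp_all add: s_def field_simps)
  then have "s * (s * c) < s * 2"
    by simp
  then have s: "s * s * c - 2 * s < 0"
    by (simp add: algebra_simps)
  have cw: "(\<Sum>j\<in>V. cnj (x j) * H j i) = cnj w"
    unfolding w_def cnj_sum using hermitian_onD[OF psd_on_hermitian[OF psd] i] by (simp add: mult.commute)
  have "0 \<le> Re (qform V H (\<lambda>j. x j + (if j = i then - of_real s * w else 0)))"
    by (rule psd_on_qform_nonneg[OF psd])
  also have "qform V H (\<lambda>j. x j + (if j = i then - of_real s * w else 0))
      = of_real (s * s * c - 2 * s) * (w * cnj w)"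
    unfolding qform_add_indicator[OF fin i] q cw w_def[symmetric] c(1)
    by (simp add: algebra_simps)
  also have "\<dots> = of_real ((s * s * c - 2 * s) * (cmod w)\<^sup>2)"
    by (simp flip: complex_norm_square)
  finally have "0 \<le> (s * s * c - 2 * s) * (cmod w)\<^sup>2"
    by simp
  then have "cmod w = 0"
    using s by (auto simp: zero_le_mult_iff)
  then show "(\<Sum>j\<in>V. H i j * x j) = 0" by (simp add: w_def)
qed

lemma qform_add_kernel:
  assumes herm: "hermitian_on V H" and k: "in_kernel V H z"
  shows "qform V H (\<lambda>j. u j + t * z j) = qform V H u"
proof -
  have row: "(\<Sum>j\<in>V. H i j * z j) = 0" if "i \<in> V" for i
    using k that unfolding in_kernel_def by blast
  have col: "(\<Sum>i\<in>V. cnj (z i) * H i j) = 0" if j: "j \<in> V" for j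
  proof -
    have "(\<Sum>i\<in>V. cnj (z i) * H i j) = cnj (\<Sum>i\<in>V. H j i * z i)"
      unfolding cnj_sum by (intro sum.cong refl) (simp add: hermitian_onD[OF herm j] mult.commute)
    then show ?thesis using row[OF j] by simp
  qed
  have mixed: "(\<Sum>i\<in>V. \<Sum>j\<in>V. cnj t * cnj (z i) * H i j * u j) = 0"
  proof -
    have "(\<Sum>i\<in>V. \<Sum>j\<in>V. cnj t * cnj (z i) * H i j * u j)
        = (\<Sum>j\<in>V. cnj t * (\<Sum>i\<in>V. cnj (z i) * H i j) * u j)"
      by (subst sum.swap) (simp add: sum_distrib_left sum_distrib_right mult.assoc)
    then show ?thesis using col by simp
  qed
  have null: "(\<Sum>i\<in>V. \<Sum>j\<in>V. cnj (u i + t * z i) * t * (H i j * z j)) = 0"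
    using row by (simp flip: sum_distrib_left)
  have "qform V H (\<lambda>j. u j + t * z j) = qform V H u
      + (\<Sum>i\<in>V. \<Sum>j\<in>V. cnj t * cnj (z i) * H i j * u j)
      + (\<Sum>i\<in>V. \<Sum>j\<in>V. cnj (u i + t * z i) * t * (H i j * z j))"
    unfolding qform_def sum.distrib[symmetric] by (intro sum.cong refl) (simp add: algebra_simps)
  then show ?thesis
    unfolding mixed null by simp
qed

section \<open>Schur complements\<close>

definition schur_compl :: "('a \<Rightarrow> 'a \<Rightarrow> complex) \<Rightarrow> 'a \<Rightarrow> 'a \<Rightarrow> 'a \<Rightarrow> complex" where
  "schur_compl H v i j = H i j - H i v * H v j / H v v"

lemma in_kernel_schur_compl:
  assumes fin: "finite V" and v: "v \<in> V" and h: "H v v \<noteq> 0" and k: "in_kernel V H z"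
  shows "in_kernel (V - {v}) (schur_compl H v) z"
  unfolding in_kernel_def
proof
  fix i assume i: "i \<in> V - {v}"
  have row: "(\<Sum>j\<in>V - {v}. H u j * z j) = - (H u v * z v)" if "u \<in> V" for u
    using k that sum.remove[OF fin v, of "\<lambda>j. H u j * z j"] unfolding in_kernel_def
    by (simp add: eq_neg_iff_add_eq_0 add.commute)
  have "(\<Sum>j\<in>V - {v}. schur_compl H v i j * z j)
      = (\<Sum>j\<in>V - {v}. H i j * z j) - H i v / H v v * (\<Sum>j\<in>V - {v}. H v j * z j)"
    unfolding schur_compl_def by (simp add: left_diff_distrib sum_subtractf sum_distrib_left mult.assoc)
  also have "\<dots> = - (H i v * z v) - H i v / H v v * (- (H v v * z v))"
    using i by (simp only: row[OF v] row[of i] Diff_iff)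
  also have "\<dots> = 0"
    using h by simp
  finally show "(\<Sum>j\<in>V - {v}. schur_compl H v i j * z j) = 0" .
qed

text \<open>The value assigned to coordinate \<open>v\<close> minimises the original form in that coordinate.\<close>

lemma qform_schur_compl:
  assumes fin: "finite V" and v: "v \<in> V" and herm: "hermitian_on V H" and h: "H v v \<noteq> 0"
  shows "qform (V - {v}) (schur_compl H v) x
    = qform V H (x(v := - (\<Sum>j\<in>V - {v}. H v j * x j) / H v v))"
proof -
  define W where "W = V - {v}"
  define a where "a = (\<Sum>j\<in>W. H v j * x j)"
  have hh: "cnj (H v v) = H v v"
    using hermitian_onD[OF herm v v] .
  have ca: "(\<Sum>i\<in>W. cnj (x i) * H i v) = cnj a"
    unfolding a_def cnj_sum W_def using hermitian_onD[OF herm v] by (simp add: mult.commute)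
  have "qform W (schur_compl H v) x = qform W H x - cnj a * a / H v v"
  proof -
    have "qform W (schur_compl H v) x
        = qform W H x - (\<Sum>i\<in>W. \<Sum>j\<in>W. (cnj (x i) * H i v) * (H v j * x j)) / H v v"
      unfolding qform_def schur_compl_def
      by (simp add: sum_subtractf sum_divide_distrib right_diff_distrib left_diff_distrib mult.assoc)
    also have "(\<Sum>i\<in>W. \<Sum>j\<in>W. (cnj (x i) * H i v) * (H v j * x j)) = cnj a * a"
      unfolding sum_product[symmetric] ca a_def ..
    finally show ?thesis .
  qed
  moreover have "qform V H (x(v := - a / H v v)) = qform W H x - cnj a * a / H v v"
  proof -
    have "V = insert v W" "finite W" "v \<notin> W"
      using v fin by (auto simp: W_def)
    then have "qform V H (x(v := - a / H v v)) = qform W H x + cnj (- a / H v v) * a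
        + cnj a * (- a / H v v) + cnj (- a / H v v) * H v v * (- a / H v v)"
      using qform_insert[of W v H x] unfolding a_def ca by simp
    also have "\<dots> = qform W H x - cnj a * a / H v v"
      using h hh by (simp add: field_simps)
    finally show ?thesis .
  qed
  ultimately show ?thesis
    by (simp add: W_def a_def)
qed

lemma psd_on_schur_compl:
  assumes fin: "finite V" and psd: "psd_on V H" and v: "v \<in> V" and h: "H v v \<noteq> 0"
  shows "psd_on (V - {v}) (schur_compl H v)"
proof -
  have herm: "hermitian_on V H"
    using psd by (rule psd_on_hermitian)
  have "hermitian_on (V - {v}) (schur_compl H v)"
    unfolding hermitian_on_def schur_compl_def
    using hermitian_onD[OF herm] v by (auto simp: mult.commute)
  moreover have "0 \<le> Re (qform (V - {v}) (schur_compl H v) x)" for x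
    unfolding qform_schur_compl[OF fin v herm h] by (rule psd_on_qform_nonneg[OF psd])
  ultimately show ?thesis
    unfolding psd_on_def by blast
qed

section \<open>Irreducible forms with off-diagonal entries in a sector\<close>

definition off_diag_in_sector :: "'a set \<Rightarrow> ('a \<Rightarrow> 'a \<Rightarrow> complex) \<Rightarrow> real \<Rightarrow> bool" where
  "off_diag_in_sector V H \<phi> \<longleftrightarrow>
     (\<forall>i\<in>V. \<forall>j\<in>V. i \<noteq> j \<longrightarrow> H i j \<noteq> 0 \<longrightarrow> in_sector \<phi> (- H i j))"

definition irreducible_on :: "'a set \<Rightarrow> ('a \<Rightarrow> 'a \<Rightarrow> complex) \<Rightarrow> bool" where
  "irreducible_on V H \<longleftrightarrow>
     (\<forall>A. A \<subseteq> V \<longrightarrow> A \<noteq> {} \<longrightarrow> A \<noteq> V \<longrightarrow> (\<exists>i\<in>A. \<exists>j\<in>V - A. H i j \<noteq> 0))"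

lemma off_diag_in_sectorD:
  "off_diag_in_sector V H \<phi> \<Longrightarrow> i \<in> V \<Longrightarrow> j \<in> V \<Longrightarrow> i \<noteq> j \<Longrightarrow> H i j \<noteq> 0 \<Longrightarrow> in_sector \<phi> (- H i j)"
  unfolding off_diag_in_sector_def by blast

text \<open>Eliminating a vertex with positive pivot at most doubles the sector angle; while the angle
  stays below \<open>\<pi>/2\<close> the two contributions to an entry cannot cancel.\<close>

lemma in_sector_neg_schur_compl:
  assumes sec: "off_diag_in_sector V H \<theta>" and t0: "0 < \<theta>" and t2: "2 * \<theta> \<le> pi / 2"
    and v: "v \<in> V" and r: "0 < r" and h: "H v v = of_real r"
    and i: "i \<in> V - {v}" and j: "j \<in> V - {v}" and ij: "i \<noteq> j"
    and nz: "H i j \<noteq> 0 \<or> H i v \<noteq> 0 \<and> H v j \<noteq> 0"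
  shows "in_sector (2 * \<theta>) (- schur_compl H v i j)"
proof -
  have split: "- schur_compl H v i j = - H i j + (- H i v) * (- H v j) / of_real r"
    unfolding schur_compl_def h by simp
  have direct: "in_sector (2 * \<theta>) (- H i j)" if "H i j \<noteq> 0"
    using off_diag_in_sectorD[OF sec _ _ ij that] i j t0 by (auto intro: in_sector_mono)
  have path: "in_sector (2 * \<theta>) ((- H i v) * (- H v j) / of_real r)" if "H i v \<noteq> 0" "H v j \<noteq> 0"
  proof -
    have "in_sector (\<theta> + \<theta>) ((- H i v) * (- H v j))"
      using off_diag_in_sectorD[OF sec _ _ _ that(1)] off_diag_in_sectorD[OF sec _ _ _ that(2)] i j v t2 t0
      by (intro in_sector_mult) auto
    then show ?thesis
      by (simp add: in_sector_divide_of_real r flip: mult_2)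
  qed
  show ?thesis
  proof (cases "H i j \<noteq> 0 \<and> H i v \<noteq> 0 \<and> H v j \<noteq> 0")
    case True
    then show ?thesis
      unfolding split using in_sector_add[OF _ t2 direct path] t0 by simp
  next
    case False
    then show ?thesis
      unfolding split using nz direct path by auto
  qed
qed

lemma off_diag_in_sector_schur_compl:
  assumes "off_diag_in_sector V H \<theta>" "0 < \<theta>" "2 * \<theta> \<le> pi / 2"
    and "v \<in> V" "0 < r" "H v v = of_real r"
  shows "off_diag_in_sector (V - {v}) (schur_compl H v) (2 * \<theta>)"
  unfolding off_diag_in_sector_def
  using in_sector_neg_schur_compl[OF assms] by (fastforce simp: schur_compl_def)

lemma schur_compl_nonzero:
  assumes "off_diag_in_sector V H \<theta>" "0 < \<theta>" "2 * \<theta> \<le> pi / 2"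
    and "v \<in> V" "0 < r" "H v v = of_real r"
    and "i \<in> V - {v}" "j \<in> V - {v}" "i \<noteq> j" "H i j \<noteq> 0 \<or> H i v \<noteq> 0 \<and> H v j \<noteq> 0"
  shows "schur_compl H v i j \<noteq> 0"
  using in_sector_neg_schur_compl[OF assms] by (auto simp: in_sector_def)

lemma irreducible_on_schur_compl:
  assumes sec: "off_diag_in_sector V H \<theta>" and t0: "0 < \<theta>" and t2: "2 * \<theta> \<le> pi / 2"
    and v: "v \<in> V" and r: "0 < r" and h: "H v v = of_real r" and irr: "irreducible_on V H"
  shows "irreducible_on (V - {v}) (schur_compl H v)"
  unfolding irreducible_on_def
proof (intro allI impI)
  fix A assume A: "A \<subseteq> V - {v}" "A \<noteq> {}" "A \<noteq> V - {v}"
  note nonzero = schur_compl_nonzero[OF sec t0 t2 v r h]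
  have "A \<subseteq> V" "A \<noteq> V"
    using A v by auto
  then obtain i j where i: "i \<in> A" and j: "j \<in> V - A" and hij: "H i j \<noteq> 0"
    using irr A(2) unfolding irreducible_on_def by blast
  show "\<exists>i\<in>A. \<exists>j\<in>V - {v} - A. schur_compl H v i j \<noteq> 0"
  proof (cases "j = v")
    case False
    then show ?thesis using i j hij A nonzero[of i j] by blast
  next
    case True
    txt \<open>The edge leaves \<open>A\<close> only through \<open>v\<close>; an edge leaving \<open>A \<union> {v}\<close> gives a path of length
      at most two to the outside.\<close>
    have "insert v A \<subseteq> V" "insert v A \<noteq> V"
      using A v by auto
    then obtain i' j' where i': "i' \<in> insert v A" and j': "j' \<in> V - insert v A" and hij': "H i' j' \<noteq> 0"
      using irr unfolding irreducible_on_def by blast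
    show ?thesis
    proof (cases "i' = v")
      case True
      then have "schur_compl H v i j' \<noteq> 0"
        using nonzero[of i j'] i j' A hij hij' \<open>j = v\<close> by auto
      then show ?thesis using i j' by blast
    next
      case False
      then show ?thesis using i' j' hij' nonzero[of i' j'] A by blast
    qed
  qed
qed

lemma psd_on_irreducible_diag_pos:
  assumes fin: "finite V" and psd: "psd_on V H" and irr: "irreducible_on V H"
    and v: "v \<in> V" and V: "V \<noteq> {v}"
  shows "0 < Re (H v v)"
proof (rule ccontr)
  assume "\<not> 0 < Re (H v v)"
  then have "H v v = 0"
    using psd_on_diag[OF fin psd v] by (simp add: complex_eq_iff)
  then have "qform V H (\<lambda>j. 0 + (if j = v then 1 else 0)) = 0"
    using qform_add_indicator[OF fin v, of H "\<lambda>_. 0" 1] by (simp add: qform_def)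
  then have "in_kernel V H (\<lambda>j. 0 + (if j = v then 1 else 0))"
    by (rule psd_on_in_kernel_if_qform_zero[OF fin psd])
  then have col: "H i v = 0" if "i \<in> V" for i
    using that fin v unfolding in_kernel_def by (simp add: if_distrib cong: if_cong)
  have "{v} \<subseteq> V" "{v} \<noteq> V"
    using v V by auto
  then obtain j where "j \<in> V - {v}" "H v j \<noteq> 0"
    using irr unfolding irreducible_on_def by blast
  then show False
    using col hermitian_onD[OF psd_on_hermitian[OF psd] v, of j] by simp
qed

lemma kernel_vanishes_if_vanishes_at:
  assumes "finite V" "card V = n" "psd_on V H" "irreducible_on V H" "off_diag_in_sector V H \<theta>"
    and "0 < \<theta>" "\<theta> \<le> pi / 2 ^ n" "in_kernel V H z" "k \<in> V" "z k = 0"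
  shows "\<forall>j\<in>V. z j = 0"
  using assms
proof (induction n arbitrary: V H \<theta>)
  case 0
  then show ?case by auto
next
  case (Suc m)
  note fin = Suc.prems(1) and card = Suc.prems(2) and psd = Suc.prems(3) and irr = Suc.prems(4)
    and sec = Suc.prems(5) and t0 = Suc.prems(6) and tb = Suc.prems(7) and ker = Suc.prems(8)
    and k = Suc.prems(9) and zk = Suc.prems(10)
  show ?case
  proof (cases "m = 0")
    case True
    then obtain a where "V = {a}"
      using card card_1_singletonE by auto
    then show ?thesis using k zk by simp
  next
    case False
    have "card (V - {k}) = m"
      using card fin k by simp
    then have "V - {k} \<noteq> {}"
      using False by (metis card.empty)
    then obtain v where v: "v \<in> V" "v \<noteq> k"
      by blast
    define r where "r = Re (H v v)"
    have r: "0 < r" "H v v = of_real r"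
      using psd_on_irreducible_diag_pos[OF fin psd irr v(1)] psd_on_diag[OF fin psd v(1)] v k
      by (auto simp: r_def)
    have "2 * \<theta> \<le> pi / 2 ^ m"
      using tb by (simp add: field_simps)
    moreover have "pi / 2 ^ m \<le> pi / 2"
      using False by (intro divide_left_mono) (auto simp: self_le_power)
    ultimately have t2: "2 * \<theta> \<le> pi / 2" "2 * \<theta> \<le> pi / 2 ^ m"
      by linarith+
    have rest: "\<forall>j\<in>V - {v}. z j = 0"
    proof (rule Suc.IH)
      show "psd_on (V - {v}) (schur_compl H v)"
        using psd_on_schur_compl[OF fin psd v(1)] r by simp
      show "irreducible_on (V - {v}) (schur_compl H v)"
        by (rule irreducible_on_schur_compl[OF sec t0 t2(1) v(1) r irr])
      show "off_diag_in_sector (V - {v}) (schur_compl H v) (2 * \<theta>)"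
        by (rule off_diag_in_sector_schur_compl[OF sec t0 t2(1) v(1) r])
      show "in_kernel (V - {v}) (schur_compl H v) z"
        using in_kernel_schur_compl[OF fin v(1) _ ker] r by simp
    qed (use fin card v k zk t0 t2 in auto)
    have "H v v * z v + (\<Sum>j\<in>V - {v}. H v j * z j) = 0"
      using ker v(1) sum.remove[OF fin v(1), of "\<lambda>j. H v j * z j"] unfolding in_kernel_def by simp
    then have "z v = 0"
      using rest r by simp
    then show ?thesis
      using rest by blast
  qed
qed

definition mat_fun :: "'a mat \<Rightarrow> nat \<Rightarrow> nat \<Rightarrow> 'a" where
  "mat_fun A i j = A $$ (i, j)"

lemma psd_mat_iff_psd_on:
  "psd_mat n A \<longleftrightarrow> A \<in> carrier_mat n n \<and> psd_on {..<n} (mat_fun A)"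
proof -
  have q: "qform {..<n} (mat_fun A) x = (\<Sum>i<n. \<Sum>j<n. cnj (x i) * A $$ (i, j) * x j)" for x
    by (simp add: qform_def mat_fun_def)
  have h: "hermitian_on {..<n} (mat_fun A) \<longleftrightarrow> (\<forall>i<n. \<forall>j<n. A $$ (i, j) = cnj (A $$ (j, i)))"
    unfolding hermitian_on_def mat_fun_def by blast
  show ?thesis
    unfolding psd_mat_def hermitian_mat_def psd_on_def q[symmetric] h[symmetric]
    using qform_real by blast
qed

lemma permutes_prefix_onto:
  assumes A: "A \<subseteq> {..<n}"
  obtains p where "p permutes {..<n}" "p ` {..<card A} = A"
proof -
  define k where "k = card A"
  have fin: "finite A" and kn: "k \<le> n"
    using A finite_subset card_mono[OF _ A] by (auto simp: k_def)
  obtain f where f: "bij_betw f {..<k} A"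
    using fin bij_betw_iff_card[of "{..<k}" A] by (auto simp: k_def)
  have "card {k..<n} = card ({..<n} - A)"
    using A fin by (simp add: card_Diff_subset k_def)
  then obtain g where g: "bij_betw g {k..<n} ({..<n} - A)"
    using bij_betw_iff_card[of "{k..<n}" "{..<n} - A"] by auto
  define p where "p i = (if i < k then f i else if i < n then g i else i)" for i
  have p1: "bij_betw p {..<k} A"
    using f by (rule bij_betw_cong[THEN iffD1, rotated]) (auto simp: p_def)
  have p2: "bij_betw p {k..<n} ({..<n} - A)"
    using g by (rule bij_betw_cong[THEN iffD1, rotated]) (auto simp: p_def)
  have "bij_betw p ({..<k} \<union> {k..<n}) (A \<union> ({..<n} - A))"
    by (rule bij_betw_combine[OF p1 p2]) auto
  moreover have "{..<k} \<union> {k..<n} = {..<n}" "A \<union> ({..<n} - A) = {..<n}"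
    using kn A by auto
  ultimately have "p permutes {..<n}"
    by (intro bij_imp_permutes) (auto simp: p_def)
  then show ?thesis
    using that p1 unfolding bij_betw_def k_def by blast
qed

lemma irreducible_mat_imp_irreducible_on:
  assumes herm: "hermitian_mat n S" and irr: "irreducible_mat n S"
  shows "irreducible_on {..<n} (mat_fun S)"
  unfolding irreducible_on_def
proof (intro allI impI, rule ccontr)
  fix A assume A: "A \<subseteq> {..<n}" "A \<noteq> {}" "A \<noteq> {..<n}"
    and no_edge: "\<not> (\<exists>i\<in>A. \<exists>j\<in>{..<n} - A. mat_fun S i j \<noteq> 0)"
  obtain p where p: "p permutes {..<n}" "p ` {..<card A} = A"
    using permutes_prefix_onto[OF A(1)] .
  have fin: "finite A"
    using A(1) finite_subset by blast
  have k: "0 < card A" "card A < n"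
    using A fin psubset_card_mono[of "{..<n}" A] by auto
  have block: "p i \<in> A \<longleftrightarrow> i < card A" if "i < n" for i
    using p that permutes_inj_on[OF p(1)] by (auto simp: inj_on_image_mem_iff permutes_in_image)
  have zero: "S $$ (p i, p j) = 0" if "i < n" "j < n" "i < card A" "card A \<le> j" for i j
  proof -
    have "p i \<in> A" "p j \<in> {..<n} - A"
      using block[of i] block[of j] that permutes_in_image[OF p(1)] by auto
    then show ?thesis
      using no_edge by (auto simp: mat_fun_def)
  qed
  have "reducible_mat n S"
    unfolding reducible_mat_def
  proof (intro exI conjI allI impI)
    fix i j assume ij: "i < n" "j < n" "i < card A \<and> card A \<le> j \<or> j < card A \<and> card A \<le> i"
    have "p i < n" "p j < n"
      using ij permutes_in_image[OF p(1)] by auto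
    then show "S $$ (p i, p j) = 0"
    proof (cases "i < card A")
      case True
      then show ?thesis using ij zero by auto
    next
      case False
      then have "S $$ (p j, p i) = 0"
        using ij zero by auto
      moreover have "S $$ (p i, p j) = cnj (S $$ (p j, p i))"
        using herm \<open>p i < n\<close> \<open>p j < n\<close> unfolding hermitian_mat_def by blast
      ultimately show ?thesis
        by simp
    qed
  qed (use p k in auto)
  then show False
    using irr unfolding irreducible_mat_def by simp
qed

lemma diagonal_mat_diff_off_diag_eq:
  fixes A B :: "'a :: ab_group_add mat"
  assumes "B \<in> carrier_mat n n" "diagonal_mat (A - B)" "i < n" "j < n" "i \<noteq> j"
  shows "mat_fun A i j = mat_fun B i j"
proof -
  have "(A - B) $$ (i, j) = 0"
    using assms unfolding diagonal_mat_def by auto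
  then show ?thesis
    using assms by (simp add: mat_fun_def)
qed

lemma irreducible_on_cong_off_diag:
  assumes "\<And>i j. i \<in> V \<Longrightarrow> j \<in> V \<Longrightarrow> i \<noteq> j \<Longrightarrow> G i j = H i j" and "irreducible_on V H"
  shows "irreducible_on V G"
  unfolding irreducible_on_def
proof (intro allI impI)
  fix A assume A: "A \<subseteq> V" "A \<noteq> {}" "A \<noteq> V"
  then obtain i j where "i \<in> A" "j \<in> V - A" "H i j \<noteq> 0"
    using assms(2) unfolding irreducible_on_def by blast
  then show "\<exists>i\<in>A. \<exists>j\<in>V - A. G i j \<noteq> 0"
    using assms(1) A(1) by (metis Diff_iff subsetD)
qed

lemma off_diag_in_sector_cong_off_diag:
  assumes "\<And>i j. i \<in> V \<Longrightarrow> j \<in> V \<Longrightarrow> i \<noteq> j \<Longrightarrow> G i j = H i j" and "off_diag_in_sector V H \<phi>"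
  shows "off_diag_in_sector V G \<phi>"
  using assms unfolding off_diag_in_sector_def by metis

lemma kernel_vanishes_for_diagonal_perturbation:
  assumes psd: "psd_mat n S" and irr: "irreducible_mat n S"
    and sector: "\<forall>i<n. \<forall>j<n. i \<noteq> j \<and> S $$ (i, j) \<noteq> 0 \<longrightarrow>
           - (pi / 2 ^ n) < Arg (- S $$ (i, j)) \<and> Arg (- S $$ (i, j)) < pi / 2 ^ n"
    and psdh: "psd_mat n Sh" and diag: "diagonal_mat (S - Sh)"
    and ker: "in_kernel {..<n} (mat_fun Sh) z" and k: "k < n" "z k = 0"
  shows "\<forall>j<n. z j = 0"
proof -
  have Sh: "Sh \<in> carrier_mat n n" "psd_on {..<n} (mat_fun Sh)"
    using psdh by (simp_all add: psd_mat_iff_psd_on)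
  have off: "\<And>i j. i \<in> {..<n} \<Longrightarrow> j \<in> {..<n} \<Longrightarrow> i \<noteq> j \<Longrightarrow> mat_fun Sh i j = mat_fun S i j"
    using diagonal_mat_diff_off_diag_eq[OF Sh(1) diag] by simp
  have "irreducible_on {..<n} (mat_fun S)"
    using psd irr unfolding psd_mat_def by (blast intro: irreducible_mat_imp_irreducible_on)
  then have "irreducible_on {..<n} (mat_fun Sh)"
    by (rule irreducible_on_cong_off_diag[rotated]) (rule off)
  moreover have "off_diag_in_sector {..<n} (mat_fun S) (pi / 2 ^ n)"
    unfolding off_diag_in_sector_def in_sector_def mat_fun_def using sector by auto
  then have "off_diag_in_sector {..<n} (mat_fun Sh) (pi / 2 ^ n)"
    by (rule off_diag_in_sector_cong_off_diag[rotated]) (rule off)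
  ultimately show ?thesis
    using kernel_vanishes_if_vanishes_at[OF _ _ Sh(2) _ _ _ _ ker, of n "pi / 2 ^ n" k] k by simp
qed

lemma index_mult_mat_vec_sum:
  assumes "A \<in> carrier_mat nr n" "w \<in> carrier_vec n" "i < nr"
  shows "(A *\<^sub>v w) $ i = (\<Sum>j<n. A $$ (i, j) * w $ j)"
  using assms by (simp add: scalar_prod_def atLeast0LessThan)

section \<open>The two rank bounds\<close>

lemma det_leading_block_nonzero:
  assumes psd: "psd_mat (Suc m) A"
    and kernel: "\<And>z. in_kernel {..<Suc m} (mat_fun A) z \<Longrightarrow> z m = 0 \<Longrightarrow> \<forall>j<Suc m. z j = 0"
  shows "det (submatrix A {..<m} {..<m}) \<noteq> 0"
proof
  assume singular: "det (submatrix A {..<m} {..<m}) = 0"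
  define B where "B = submatrix A {..<m} {..<m}"
  have A: "A \<in> carrier_mat (Suc m) (Suc m)" "psd_on {..<Suc m} (mat_fun A)"
    using psd by (simp_all add: psd_mat_iff_psd_on)
  have "{i. i < dim_row A \<and> i \<in> {..<m}} = {..<m}" "{j. j < dim_col A \<and> j \<in> {..<m}} = {..<m}"
    using A(1) by auto
  then have B: "B \<in> carrier_mat m m"
    unfolding B_def by (intro carrier_matI) (simp_all only: dim_submatrix card_lessThan)
  have Bij: "B $$ (i, j) = A $$ (i, j)" if "i < m" "j < m" for i j
  proof -
    have "{a \<in> {..<m}. a < i} = {..<i}" "{a \<in> {..<m}. a < j} = {..<j}"
      using that by auto
    then show ?thesis
      using submatrix_index_card[of i A j "{..<m}" "{..<m}"] that A(1) by (simp add: B_def)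
  qed
  obtain w where w: "w \<in> carrier_vec m" "w \<noteq> 0\<^sub>v m" "B *\<^sub>v w = 0\<^sub>v m"
    using singular det_0_iff_vec_prod_zero_field[OF B]
    unfolding B_def by blast
  define z where "z j = (if j < m then w $ j else 0)" for j
  have "qform {..<Suc m} (mat_fun A) z = (\<Sum>i<m. \<Sum>j<m. cnj (z i) * A $$ (i, j) * z j)"
    by (simp add: qform_def mat_fun_def z_def)
  also have "\<dots> = (\<Sum>i<m. cnj (w $ i) * (B *\<^sub>v w) $ i)"
    by (intro sum.cong refl)
      (simp add: z_def Bij index_mult_mat_vec_sum[OF B w(1)] sum_distrib_left mult.assoc)
  also have "\<dots> = 0"
    using w(3) by simp
  finally have "in_kernel {..<Suc m} (mat_fun A) z"
    using psd_on_in_kernel_if_qform_zero[OF _ A(2)] by simp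
  moreover have "z m = 0"
    by (simp add: z_def)
  ultimately have "\<forall>j<Suc m. z j = 0"
    by (rule kernel)
  then have "w $ i = 0" if "i < m" for i
    using that unfolding z_def by (metis less_Suc_eq)
  then have "w = 0\<^sub>v m"
    using w(1) by (intro eq_vecI) auto
  then show False
    using w(2) by simp
qed

lemma rank_ge_if_kernel_vanishes_at_last:
  assumes psd: "psd_mat n A"
    and kernel: "\<And>z. in_kernel {..<n} (mat_fun A) z \<Longrightarrow> z (n - 1) = 0 \<Longrightarrow> \<forall>j<n. z j = 0"
  shows "n - 1 \<le> vec_space.rank n A"
proof (cases n)
  case (Suc m)
  have "det (submatrix A {..<m} {..<m}) \<noteq> 0"
  proof (rule det_leading_block_nonzero)
    show "psd_mat (Suc m) A"
      using psd Suc by simp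
    show "\<forall>j<Suc m. z j = 0" if "in_kernel {..<Suc m} (mat_fun A) z" "z m = 0" for z
      using kernel[of z] that Suc by simp
  qed
  then have "card {j. j < n \<and> j \<in> {..<m}} \<le> vec_space.rank n A"
    using psd by (intro vec_space.rank_gt_minor) (simp add: psd_mat_iff_psd_on)
  moreover have "{j. j < n \<and> j \<in> {..<m}} = {..<m}"
    using Suc by auto
  ultimately show ?thesis
    using Suc by simp
qed simp

text \<open>Writing \<open>x = u + t w\<close> with \<open>u\<^sub>m = 0\<close>, the kernel vector \<open>w\<close> does not contribute and the
  changed entry \<open>(m, m)\<close> is never seen by \<open>u\<close>.\<close>

lemma psd_on_diag_change_with_kernel_vector:
  assumes psd: "psd_on V H" and herm: "hermitian_on V G"
    and agree: "\<And>i j. i \<in> V \<Longrightarrow> j \<in> V \<Longrightarrow> (i, j) \<noteq> (m, m) \<Longrightarrow> G i j = H i j"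
    and ker: "in_kernel V G w" and wm: "w m \<noteq> 0"
  shows "psd_on V G"
  unfolding psd_on_def
proof (intro conjI allI herm)
  fix x
  define t where "t = x m / w m"
  define u where "u j = x j - t * w j" for j
  have "qform V G x = qform V G (\<lambda>j. u j + t * w j)"
    by (simp add: u_def)
  also have "\<dots> = qform V G u"
    by (rule qform_add_kernel[OF herm ker])
  also have "\<dots> = qform V H u"
  proof -
    have "cnj (u i) * G i j * u j = cnj (u i) * H i j * u j" if "i \<in> V" "j \<in> V" for i j
      using agree[OF that] wm by (cases "(i, j) = (m, m)") (auto simp: u_def t_def)
    then show ?thesis
      unfolding qform_def by (intro sum.cong refl) simp
  qed
  finally show "0 \<le> Re (qform V G x)"
    using psd_on_qform_nonneg[OF psd] by simp
qed

lemma exists_vec_annihilated_by_other_rows: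
  fixes A :: "'a :: field mat"
  assumes A: "A \<in> carrier_mat n n" and m: "m < n"
  obtains w where "w \<in> carrier_vec n" "w \<noteq> 0\<^sub>v n" "\<And>i. i < n \<Longrightarrow> i \<noteq> m \<Longrightarrow> (A *\<^sub>v w) $ i = 0"
proof -
  define M where "M = mat\<^sub>r n n (\<lambda>i. if i = m then 0\<^sub>v n else row A i)"
  have M: "M \<in> carrier_mat n n"
    unfolding M_def by (rule mat_row_carrierI)
  have "det M = 0"
    unfolding M_def by (rule det_row_0[OF m]) (use A in auto)
  then obtain w where w: "w \<in> carrier_vec n" "w \<noteq> 0\<^sub>v n" "M *\<^sub>v w = 0\<^sub>v n"
    using det_0_iff_vec_prod_zero_field[OF M] by blast
  have "(A *\<^sub>v w) $ i = (M *\<^sub>v w) $ i" if "i < n" "i \<noteq> m" for i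
    using that A M w(1) by (simp add: index_mult_mat_vec_sum M_def)
  then show ?thesis
    using that w by simp
qed

lemma exists_vec_mapped_to_unit_multiple:
  assumes psd: "psd_mat n S" and m: "m < n"
    and kernel: "\<And>z. in_kernel {..<n} (mat_fun S) z \<Longrightarrow> z m = 0 \<Longrightarrow> \<forall>j<n. z j = 0"
  obtains w :: "complex vec" and c :: complex
  where "w \<in> carrier_vec n" "w $ m \<noteq> 0" "c \<in> \<real>"
    "\<And>i. i < n \<Longrightarrow> (S *\<^sub>v w) $ i = (if i = m then c * w $ m else 0)"
proof -
  have S: "S \<in> carrier_mat n n" "psd_on {..<n} (mat_fun S)"
    using psd by (simp_all add: psd_mat_iff_psd_on)
  obtain w where w: "w \<in> carrier_vec n" "w \<noteq> 0\<^sub>v n" "\<And>i. i < n \<Longrightarrow> i \<noteq> m \<Longrightarrow> (S *\<^sub>v w) $ i = 0"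
    using exists_vec_annihilated_by_other_rows[OF S(1) m] by blast
  define s where "s = (S *\<^sub>v w) $ m"
  have q: "qform {..<n} (mat_fun S) (\<lambda>j. w $ j) = cnj (w $ m) * s"
  proof -
    have "qform {..<n} (mat_fun S) (\<lambda>j. w $ j) = (\<Sum>i<n. cnj (w $ i) * (S *\<^sub>v w) $ i)"
      unfolding qform_def mat_fun_def
      by (intro sum.cong refl) (simp add: index_mult_mat_vec_sum[OF S(1) w(1)] sum_distrib_left mult.assoc)
    also have "\<dots> = (\<Sum>i<n. if i = m then cnj (w $ m) * s else 0)"
      using w(3) by (intro sum.cong refl) (simp add: s_def)
    finally show ?thesis
      using m by simp
  qed
  have wm: "w $ m \<noteq> 0"
  proof
    assume wm: "w $ m = 0"
    then have "in_kernel {..<n} (mat_fun S) (\<lambda>j. w $ j)"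
      using q psd_on_in_kernel_if_qform_zero[OF _ S(2)] by simp
    then have "\<forall>j<n. w $ j = 0"
      using kernel wm by blast
    then have "w = 0\<^sub>v n"
      using w(1) by (intro eq_vecI) auto
    then show False
      using w(2) by simp
  qed
  define c where "c = s / w $ m"
  have "c = qform {..<n} (mat_fun S) (\<lambda>j. w $ j) / of_real ((cmod (w $ m))\<^sup>2)"
    unfolding q c_def complex_norm_square using wm by (simp add: field_simps)
  then have "c \<in> \<real>"
    using qform_real[OF psd_on_hermitian[OF S(2)]] by simp
  moreover have "(S *\<^sub>v w) $ i = (if i = m then c * w $ m else 0)" if "i < n" for i
    using w(3) that wm by (simp add: c_def s_def)
  ultimately show ?thesis
    using that w(1) wm by blast
qed

lemma exists_singular_diag_perturbation:
  assumes psd: "psd_mat n S" and m: "m < n"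
    and kernel: "\<And>z. in_kernel {..<n} (mat_fun S) z \<Longrightarrow> z m = 0 \<Longrightarrow> \<forall>j<n. z j = 0"
  obtains Sh where "psd_mat n Sh" "diagonal_mat (S - Sh)" "vec_space.rank n Sh < n"
proof -
  have S: "S \<in> carrier_mat n n" "psd_on {..<n} (mat_fun S)"
    using psd by (simp_all add: psd_mat_iff_psd_on)
  obtain w c where w: "w \<in> carrier_vec n" "w $ m \<noteq> 0" "c \<in> \<real>"
    "\<And>i. i < n \<Longrightarrow> (S *\<^sub>v w) $ i = (if i = m then c * w $ m else 0)"
    using exists_vec_mapped_to_unit_multiple[OF psd m kernel] by blast
  define Sh where "Sh = mat n n (\<lambda>(i, j). S $$ (i, j) - (if i = m \<and> j = m then c else 0))"
  have Sh: "Sh \<in> carrier_mat n n"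
    by (simp add: Sh_def)
  have "(Sh *\<^sub>v w) $ i = 0" if "i < n" for i
  proof -
    have "(Sh *\<^sub>v w) $ i = (\<Sum>j<n. Sh $$ (i, j) * w $ j)"
      by (rule index_mult_mat_vec_sum[OF Sh w(1) that])
    also have "\<dots> = (\<Sum>j<n. S $$ (i, j) * w $ j) - (if i = m then c * w $ m else 0)"
      using that m
      by (cases "i = m")
        (simp_all add: Sh_def left_diff_distrib sum_subtractf if_distrib[of "\<lambda>x. x * _"] cong: if_cong)
    also have "\<dots> = (S *\<^sub>v w) $ i - (if i = m then c * w $ m else 0)"
      by (simp only: index_mult_mat_vec_sum[OF S(1) w(1) that])
    finally show ?thesis
      using w(4)[OF that] by simp
  qed
  then have Shw: "Sh *\<^sub>v w = 0\<^sub>v n"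
    using Sh by (intro eq_vecI) auto
  have herm: "hermitian_on {..<n} (mat_fun Sh)"
    using hermitian_onD[OF psd_on_hermitian[OF S(2)]] w(3)
    unfolding hermitian_on_def by (auto simp: Sh_def mat_fun_def Reals_cnj_iff)
  have ker: "in_kernel {..<n} (mat_fun Sh) (\<lambda>j. w $ j)"
    unfolding in_kernel_def mat_fun_def
    using Shw index_mult_mat_vec_sum[OF Sh w(1)] by (metis index_zero_vec(1) lessThan_iff)
  have agree: "mat_fun Sh i j = mat_fun S i j" if "i \<in> {..<n}" "j \<in> {..<n}" "(i, j) \<noteq> (m, m)" for i j
    using that by (auto simp: Sh_def mat_fun_def)
  have "psd_on {..<n} (mat_fun Sh)"
    using psd_on_diag_change_with_kernel_vector[OF S(2) herm agree ker] w(2) by simp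
  then have "psd_mat n Sh"
    using Sh by (simp add: psd_mat_iff_psd_on)
  moreover have "diagonal_mat (S - Sh)"
    using S(1) by (auto simp: diagonal_mat_def Sh_def)
  moreover have "vec_space.rank n Sh < n"
  proof -
    have "w \<noteq> 0\<^sub>v n"
      using w(2) m by auto
    then have "det Sh = 0"
      using det_0_iff_vec_prod_zero_field[OF Sh] w(1) Shw by blast
    then show ?thesis
      by (rule vec_space.det_zero_low_rank[OF Sh])
  qed
  ultimately show ?thesis
    using that by blast
qed

theorem theorem4:
  fixes n :: nat and \<Sigma> :: "complex mat"
  assumes "\<Sigma> \<in> carrier_mat n n"
    and "psd_mat n \<Sigma>"
    and "irreducible_mat n \<Sigma>"
    and "\<forall>i<n. \<forall>j<n. i \<noteq> j \<and> \<Sigma> $$ (i, j) \<noteq> 0 \<longrightarrow>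
           - (pi / 2 ^ n) < Arg (- \<Sigma> $$ (i, j)) \<and> Arg (- \<Sigma> $$ (i, j)) < pi / 2 ^ n"
  shows "mr n \<Sigma> = n - 1"
proof -
  define feasible where
    "feasible = {Sh. Sh \<in> carrier_mat n n \<and> psd_mat n Sh \<and> diagonal_mat (\<Sigma> - Sh)}"
  have kernel: "\<forall>j<n. z j = 0"
    if "Sh \<in> feasible" "in_kernel {..<n} (mat_fun Sh) z" "z (n - 1) = 0" for Sh z
    using kernel_vanishes_for_diagonal_perturbation[OF assms(2-4), of Sh z "n - 1"] that
    by (cases n) (auto simp: feasible_def)
  have lower: "n - 1 \<le> vec_space.rank n Sh" if "Sh \<in> feasible" for Sh
    using rank_ge_if_kernel_vanishes_at_last kernel[OF that] that by (simp add: feasible_def)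
  obtain Sh where Sh: "Sh \<in> feasible" "vec_space.rank n Sh \<le> n - 1"
  proof (cases n)
    case 0
    have "\<Sigma> \<in> feasible"
      using assms(1,2) by (auto simp: feasible_def diagonal_mat_def)
    then show ?thesis
      using that vec_space.rank_le_nc[OF assms(1)] 0 by simp
  next
    case (Suc m)
    then obtain Sh where "psd_mat n Sh" "diagonal_mat (\<Sigma> - Sh)" "vec_space.rank n Sh < n"
      using exists_singular_diag_perturbation[OF assms(2), of m] kernel[of \<Sigma>] assms(1,2)
      by (auto simp: feasible_def diagonal_mat_def)
    then show ?thesis
      using that[of Sh] by (auto simp: feasible_def psd_mat_iff_psd_on)
  qed
  have "vec_space.rank n ` feasible \<subseteq> {..n}"
    using vec_space.rank_le_nc by (auto simp: feasible_def)
  then have "Min (vec_space.rank n ` feasible) = n - 1"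
    using lower Sh by (intro Min_eqI) (auto intro: finite_subset le_antisym)
  then show ?thesis
    unfolding mr_def feasible_def by (simp add: setcompr_eq_image)
qed

end
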